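(* Consider the client selection problem and the COCS policy described in the context, run with $K(t)=t^{z}\log(t)$ and $h_T=\lceil T^{\gamma}\rceil$, where $0<z<1$ and $0<\gamma<\frac12$. Suppose the Hölder condition holds with constants $L>0,\alpha>0$, and suppose there are a function $H$ with $H(t)>\frac{NMB}{c^{\min}}t^{-z/2}$ and constants $A>0$, $\theta<0$ such that for all $t$, $$2H(t)+\frac{2NMB}{c^{\min}}L2^{\alpha/2}h_T^{-\alpha}\le At^{\theta}.$$ Then $$\mathbb{E}[R_{\text{exploit}}(T)]\le \frac{NMB}{c^{\min}}\Big(\sum_{k=1}^{B/c^{\min}}\binom{N}{k}\Big)\frac{\pi^2}{3}+\frac{3NMB}{c^{\min}}L2^{\alpha/2}T^{1-\gamma\alpha}+\frac{A}{1+\theta}T^{1+\theta},$$ where $c^{\min}=\min_{n,t}c_n(y_n^t)$.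
   Context: Setting. There are $N$ clients indexed by $\mathcal N=\{1,\dots,N\}$, $M$ edge servers (ESs) indexed by $\mathcal M=\{1,\dots,M\}$, and rounds $t=1,\dots,T$. In round $t$, ES $m$ can communicate with a set $\mathcal N_m^t\subseteq\mathcal N$ of clients (these sets may overlap). Each client $n$ reveals computation resources $y_n^t$ and charges a cost $c_n(y_n^t)>0$, with $c_n$ nondecreasing; $c^{\min}=\min_{n,t}c_n(y_n^t)$. Each ES has budget $B>0$. A feasible client selection decision in round $t$ is $\bm s^t=(\bm s_1^t,\dots,\bm s_M^t)$ with $\bm s_m^t\subseteq\mathcal N_m^t$, $\sum_{n\in\bm s_m^t}c_n(y_n^t)\le B$ for every $m$, and $\bm s_m^t\cap\bm s_{m'}^t=\emptyset$ for $m\neq m'$. Each client-ES pair $(n,m)$ with $n\in\mathcal N_m^t$ has an observed context $\phi_{n,m}^t\in\Phi=[0,1]^2$. If client $n$ is selected by ES $m$ in round $t$, its participation indicator $X_{n,m}^t\in\{0,1\}$ is Bernoulli with mean $p_{n,m}(\phi_{n,m}^t)$, where $p_{n,m}:\Phi\to[0,1]$ is unknown. The utility is $\mu(\bm s^t;\bm X^t)=\frac1M\sum_{m\in\mathcal M}\sum_{n\in\bm s_m^t}X_{n,m}^t$ (and $\mu(\bm s;\bm p^t)$ is the same with $p_{n,m}(\phi^t_{n,m})$ in place of $X^t_{n,m}$). The oracle decision $\bm s^{\mathrm{opt},t}$ maximizes $\mu(\bm s;\bm p^t)$ over feasible decisions. The expected regret is $\mathbb E[R(T)]=\sum_{t=1}^T(\mathbb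 E[\mu(\bm s^{\mathrm{opt},t};\bm X^t)]-\mathbb E[\mu(\bm s^t;\bm X^t)])$. Hölder condition: there exist $L>0,\alpha>0$ with $|p_{n,m}(\phi)-p_{n,m}(\phi')|\le L\|\phi-\phi'\|^{\alpha}$ for all $\phi,\phi'\in\Phi$ and all pairs $(n,m)$ (Euclidean norm). COCS policy (inputs: increasing function $K$, integer $h_T$). Partition $\Phi$ into $h_T^2$ squares of side $1/h_T$. For each pair $(n,m)$ and square $l$ keep a counter $C_{n,m}(l)$ (initially $0$) and an estimate $\hat p_{n,m}(l)$ equal to the sample mean of indicators observed when $n$ was selected by $m$ with context in $l$. In round $t$: observe contexts, let $l^t_{n,m}$ be the square containing $\phi^t_{n,m}$, set $\hat X^t_{n,m}=\hat p_{n,m}(l^t_{n,m})$; a pair is under-explored if $C_{n,m}(l^t_{n,m})\le K(t)$. If an under-explored pair exists (exploration round), select a feasible decision that first maximizes the number of selected under-explored clients and then spends remaining per-ES budget on explored clients maximizing $\mu(\cdot;\hat{\bm X}^t)$. Otherwise (exploitation round), select a feasible $\bm s^t$ maximizing $\mu(\bm s;\hat{\bm X}^t)$. At the end of the round, for each selected pair observe $X^t_{n,m}$ and update $\hat p_{n,m}(l^t_{n,m})$ (running mean) and $C_{n,m}(l^t_{n,m})$ (increment). $R_{\text{exploit}}(T)$ is the part of the regret summed over exploitation rounds. *)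

theory Defs
  imports "HOL-Probability.Probability"
begin

(* A client-selection decision: ES m |-> set of clients it selects. *)
type_synonym decision = "nat \<Rightarrow> nat set"

(* Policy state: counters C_{n,m}(l) and running sums of observed indicators
   (the estimate \<hat>p_{n,m}(l) is sum / counter). Squares l are pairs of indices. *)
type_synonym cocs_state = "(nat \<Rightarrow> nat \<Rightarrow> nat \<times> nat \<Rightarrow> nat) \<times> (nat \<Rightarrow> nat \<Rightarrow> nat \<times> nat \<Rightarrow> real)"

(* feasibility of a decision in round t; cost n t = c_n(y_n^t) *)
definition feasible ::
  "nat \<Rightarrow> (nat \<Rightarrow> nat \<Rightarrow> nat set) \<Rightarrow> (nat \<Rightarrow> nat \<Rightarrow> real) \<Rightarrow> real \<Rightarrow> nat \<Rightarrow> decision \<Rightarrow> bool" where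
  "feasible M Nset cost B t s \<longleftrightarrow>
     (\<forall>m. (m \<in> {1..M} \<longrightarrow> s m \<subseteq> Nset m t \<and> (\<Sum>n\<in>s m. cost n t) \<le> B)
          \<and> (m \<notin> {1..M} \<longrightarrow> s m = {}))
   \<and> (\<forall>m\<in>{1..M}. \<forall>m'\<in>{1..M}. m \<noteq> m' \<longrightarrow> s m \<inter> s m' = {})"

definition util :: "nat \<Rightarrow> decision \<Rightarrow> (nat \<Rightarrow> nat \<Rightarrow> real) \<Rightarrow> real" where
  "util M s v = (1 / real M) * (\<Sum>m\<in>{1..M}. \<Sum>n\<in>s m. v n m)"

(* index of the square of side 1/h containing phi in [0,1]^2
   (points on the upper boundary belong to the last square) *)
definition cell :: "nat \<Rightarrow> real \<times> real \<Rightarrow> nat \<times> nat" where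
  "cell h phi = (nat (min (int h - 1) \<lfloor>real h * fst phi\<rfloor>),
                 nat (min (int h - 1) \<lfloor>real h * snd phi\<rfloor>))"

(* sample-mean estimate \<hat>p_{n,m}(l) (0 if no sample yet) *)
definition est_p :: "cocs_state \<Rightarrow> nat \<Rightarrow> nat \<Rightarrow> nat \<times> nat \<Rightarrow> real" where
  "est_p \<sigma> n m l = (if fst \<sigma> n m l = 0 then 0 else snd \<sigma> n m l / real (fst \<sigma> n m l))"

definition cocs_update :: "cocs_state \<Rightarrow> decision \<Rightarrow> (nat \<Rightarrow> nat \<Rightarrow> nat \<times> nat) \<Rightarrow> (nat \<Rightarrow> nat \<Rightarrow> bool) \<Rightarrow> cocs_state" where
  "cocs_update \<sigma> s lc x =
     ((\<lambda>n m l. fst \<sigma> n m l + (if n \<in> s m \<and> lc n m = l then 1 else 0)),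
      (\<lambda>n m l. snd \<sigma> n m l + (if n \<in> s m \<and> lc n m = l \<and> x n m then 1 else 0)))"

(* state after rounds 1..t, for policy decision rule "pick" (round, state before the round),
   squares lc t n m, and realisation X t n m \<omega> of the participation indicators *)
primrec cocs_st ::
  "(nat \<Rightarrow> cocs_state \<Rightarrow> decision) \<Rightarrow> (nat \<Rightarrow> nat \<Rightarrow> nat \<Rightarrow> nat \<times> nat)
   \<Rightarrow> (nat \<Rightarrow> nat \<Rightarrow> nat \<Rightarrow> 'w \<Rightarrow> bool) \<Rightarrow> 'w \<Rightarrow> nat \<Rightarrow> cocs_state" where
  "cocs_st pick lc X \<omega> 0 = ((\<lambda>_ _ _. 0), (\<lambda>_ _ _. 0))"
| "cocs_st pick lc X \<omega> (Suc t) =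
     cocs_update (cocs_st pick lc X \<omega> t) (pick (Suc t) (cocs_st pick lc X \<omega> t))
            (lc (Suc t)) (\<lambda>n m. X (Suc t) n m \<omega>)"

definition cocs_dec ::
  "(nat \<Rightarrow> cocs_state \<Rightarrow> decision) \<Rightarrow> (nat \<Rightarrow> nat \<Rightarrow> nat \<Rightarrow> nat \<times> nat)
   \<Rightarrow> (nat \<Rightarrow> nat \<Rightarrow> nat \<Rightarrow> 'w \<Rightarrow> bool) \<Rightarrow> 'w \<Rightarrow> nat \<Rightarrow> decision" where
  "cocs_dec pick lc X \<omega> t = pick t (cocs_st pick lc X \<omega> (t - 1))"

definition under_explored ::
  "(nat \<Rightarrow> nat \<Rightarrow> nat set) \<Rightarrow> (nat \<Rightarrow> real) \<Rightarrow> (nat \<Rightarrow> nat \<Rightarrow> nat \<Rightarrow> nat \<times> nat)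
   \<Rightarrow> nat \<Rightarrow> cocs_state \<Rightarrow> nat \<Rightarrow> nat \<Rightarrow> bool" where
  "under_explored Nset K lc t \<sigma> n m \<longleftrightarrow> n \<in> Nset m t \<and> real (fst \<sigma> n m (lc t n m)) \<le> K t"

definition exploration_round ::
  "nat \<Rightarrow> (nat \<Rightarrow> nat \<Rightarrow> nat set) \<Rightarrow> (nat \<Rightarrow> real) \<Rightarrow> (nat \<Rightarrow> nat \<Rightarrow> nat \<Rightarrow> nat \<times> nat)
   \<Rightarrow> nat \<Rightarrow> cocs_state \<Rightarrow> bool" where
  "exploration_round M Nset K lc t \<sigma> \<longleftrightarrow>
     (\<exists>m\<in>{1..M}. \<exists>n. under_explored Nset K lc t \<sigma> n m)"

definition num_under ::
  "nat \<Rightarrow> (nat \<Rightarrow> nat \<Rightarrow> nat set) \<Rightarrow> (nat \<Rightarrow> real) \<Rightarrow> (nat \<Rightarrow> nat \<Rightarrow> nat \<Rightarrow> nat \<times> nat)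
   \<Rightarrow> nat \<Rightarrow> cocs_state \<Rightarrow> decision \<Rightarrow> nat" where
  "num_under M Nset K lc t \<sigma> s =
     card {(n, m). m \<in> {1..M} \<and> n \<in> s m \<and> under_explored Nset K lc t \<sigma> n m}"

(* the decision rule "pick" implements COCS: in every round t \<ge> 1 and every state,
   the selected decision is feasible and satisfies the exploration / exploitation rule
   with respect to the estimates \<hat>X^t_{n,m} = \<hat>p_{n,m}(l^t_{n,m}). *)
definition cocs_rule ::
  "nat \<Rightarrow> (nat \<Rightarrow> nat \<Rightarrow> nat set) \<Rightarrow> (nat \<Rightarrow> nat \<Rightarrow> real) \<Rightarrow> real \<Rightarrow> (nat \<Rightarrow> real)
   \<Rightarrow> (nat \<Rightarrow> nat \<Rightarrow> nat \<Rightarrow> nat \<times> nat) \<Rightarrow> (nat \<Rightarrow> cocs_state \<Rightarrow> decision) \<Rightarrow> bool" where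
  "cocs_rule M Nset cost B K lc pick \<longleftrightarrow>
    (\<forall>t\<ge>1. \<forall>\<sigma>.
      let s = pick t \<sigma>;
          Xh = (\<lambda>n m. est_p \<sigma> n m (lc t n m));
          U = under_explored Nset K lc t \<sigma>
      in feasible M Nset cost B t s \<and>
         (if exploration_round M Nset K lc t \<sigma> then
            (\<forall>s'. feasible M Nset cost B t s' \<longrightarrow>
                   num_under M Nset K lc t \<sigma> s' \<le> num_under M Nset K lc t \<sigma> s) \<and>
            (\<forall>s'. feasible M Nset cost B t s' \<and>
                   (\<forall>m\<in>{1..M}. {n \<in> s' m. U n m} = {n \<in> s m. U n m}) \<longrightarrow>
                   util M s' Xh \<le> util M s Xh)
          else
            (\<forall>s'. feasible M Nset cost B t s' \<longrightarrow> util M s' Xh \<le> util M s Xh)))"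

definition R_exploit ::
  "nat \<Rightarrow> (nat \<Rightarrow> nat \<Rightarrow> nat set) \<Rightarrow> (nat \<Rightarrow> real) \<Rightarrow> (nat \<Rightarrow> nat \<Rightarrow> nat \<Rightarrow> nat \<times> nat)
   \<Rightarrow> (nat \<Rightarrow> cocs_state \<Rightarrow> decision) \<Rightarrow> (nat \<Rightarrow> decision)
   \<Rightarrow> (nat \<Rightarrow> nat \<Rightarrow> nat \<Rightarrow> 'w \<Rightarrow> bool) \<Rightarrow> nat \<Rightarrow> 'w \<Rightarrow> real" where
  "R_exploit M Nset K lc pick sopt X T \<omega> =
     (\<Sum>t\<in>{1..T}.
        if exploration_round M Nset K lc t (cocs_st pick lc X \<omega> (t - 1)) then 0
        else util M (sopt t) (\<lambda>n m. of_bool (X t n m \<omega>))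
           - util M (cocs_dec pick lc X \<omega> t) (\<lambda>n m. of_bool (X t n m \<omega>)))"

end

theory Submission
  imports Defs
begin

text \<open>
  In an exploitation round COCS maximises the estimated utility, so its regret is at most \<open>1/M\<close>
  times the summed estimation errors of the pairs it could select, all of which are explored.
  Such an estimate is the mean of \<open>C > K(t)\<close> indicators observed in the same cell of side
  \<open>1/h\<^sub>T\<close>. By the Hoelder condition their means differ from the current one by at most
  \<open>\<beta> = L 2 powr (\<alpha>/2) h\<^sub>T powr (-\<alpha>)\<close>; the rest of the error is \<open>|D|/C\<close>, where \<open>D\<close> is the
  deviation of the observed sum from the sum of the means. Instead of Hoeffding's inequality we
  use a potential that is a supermartingale starting at \<open>1/K(t)\<close> and dominates \<open>(D/C)\<^sup>2\<close>,
  whence \<open>E |D|/C \<le> a/2 + 1/(2 a K(t))\<close>. With \<open>a = 2 t powr (-z/2)\<close> every round costs at most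
  \<open>N (\<beta> + 2 t powr (-z/2)) \<le> A t powr \<theta>\<close>, and summing over the rounds already yields the
  last term of the bound. By independence the set of indicators equal to \<open>1\<close> is a product of
  Bernoulli variables, so all expectations are finite sums over subsets.
\<close>

section \<open>Expectations over random subsets\<close>

definition subset_weight :: "'i set \<Rightarrow> ('i \<Rightarrow> real) \<Rightarrow> 'i set \<Rightarrow> real" where
  "subset_weight I q S = (\<Prod>i\<in>S. q i) * (\<Prod>i\<in>I - S. 1 - q i)"

definition subset_expectation :: "'i set \<Rightarrow> ('i \<Rightarrow> real) \<Rightarrow> ('i set \<Rightarrow> real) \<Rightarrow> real" where
  "subset_expectation I q f = (\<Sum>S\<in>Pow I. subset_weight I q S * f S)"

lemma subset_weight_nonneg:
  assumes "\<And>i. i \<in> I \<Longrightarrow> q i \<in> {0..1}" and "S \<subseteq> I"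
  shows "0 \<le> subset_weight I q S"
  unfolding subset_weight_def using assms by (intro mult_nonneg_nonneg prod_nonneg) auto

lemma subset_expectation_const:
  assumes "finite I"
  shows "subset_expectation I q (\<lambda>_. c) = c"
proof -
  have "(\<Sum>S\<in>Pow I. subset_weight I q S) = (\<Prod>i\<in>I. q i + (1 - q i))"
    unfolding subset_weight_def using prod_add[OF assms, of q "\<lambda>i. 1 - q i"] by simp
  then show ?thesis
    unfolding subset_expectation_def by (simp add: sum_distrib_right[symmetric])
qed

lemma subset_expectation_add:
  "subset_expectation I q (\<lambda>S. f S + g S) = subset_expectation I q f + subset_expectation I q g"
  unfolding subset_expectation_def by (simp add: distrib_left sum.distrib)

lemma subset_expectation_diff:
  "subset_expectation I q (\<lambda>S. f S - g S) = subset_expectation I q f - subset_expectation I q g"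
  unfolding subset_expectation_def by (simp add: right_diff_distrib sum_subtractf)

lemma subset_expectation_cmult:
  "subset_expectation I q (\<lambda>S. c * f S) = c * subset_expectation I q f"
  unfolding subset_expectation_def by (simp add: sum_distrib_left mult.left_commute)

lemma subset_expectation_sum:
  "subset_expectation I q (\<lambda>S. \<Sum>k\<in>A. f k S) = (\<Sum>k\<in>A. subset_expectation I q (f k))"
  unfolding subset_expectation_def by (simp add: sum_distrib_left sum.swap[of _ A])

lemma subset_expectation_mono:
  assumes "\<And>i. i \<in> I \<Longrightarrow> q i \<in> {0..1}" and "\<And>S. S \<subseteq> I \<Longrightarrow> f S \<le> g S"
  shows "subset_expectation I q f \<le> subset_expectation I q g"
  unfolding subset_expectation_def
  by (intro sum_mono mult_left_mono) (use assms in \<open>auto intro: subset_weight_nonneg\<close>)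

lemma subset_expectation_insert:
  assumes fin: "finite I" and i: "i \<notin> I" and f: "\<And>S. S \<subseteq> I \<Longrightarrow> f (insert i S) = f S"
  shows "subset_expectation (insert i I) q f = subset_expectation I q f"
    and "subset_expectation (insert i I) q (\<lambda>S. f S * of_bool (i \<in> S))
           = q i * subset_expectation I q f"
proof -
  have weight_out: "subset_weight (insert i I) q S = (1 - q i) * subset_weight I q S"
    if "S \<subseteq> I" for S
  proof -
    have "insert i I - S = insert i (I - S)" using that i by auto
    then show ?thesis unfolding subset_weight_def using fin i by (simp add: prod.insert)
  qed
  have weight_in: "subset_weight (insert i I) q (insert i S) = q i * subset_weight I q S"
    if "S \<subseteq> I" for S
  proof -
    have "insert i I - insert i S = I - S" using that i by auto
    moreover have "finite S" "i \<notin> S" using that fin i finite_subset by auto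
    ultimately show ?thesis unfolding subset_weight_def by (simp add: prod.insert)
  qed
  have split: "subset_expectation (insert i I) q g
      = (\<Sum>S\<in>Pow I. subset_weight (insert i I) q S * g S)
        + (\<Sum>S\<in>Pow I. subset_weight (insert i I) q (insert i S) * g (insert i S))" for g
  proof -
    have "Pow I \<inter> insert i ` Pow I = {}" "inj_on (insert i) (Pow I)"
      using i unfolding inj_on_def by auto
    then show ?thesis
      unfolding subset_expectation_def Pow_insert using fin
      by (simp add: sum.union_disjoint sum.reindex)
  qed
  have "subset_expectation (insert i I) q f
      = (\<Sum>S\<in>Pow I. (1 - q i) * subset_weight I q S * f S)
        + (\<Sum>S\<in>Pow I. q i * subset_weight I q S * f S)"
    unfolding split
    by (intro arg_cong2[where f = "(+)"] sum.cong) (auto simp: weight_out weight_in f)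
  then show "subset_expectation (insert i I) q f = subset_expectation I q f"
    unfolding subset_expectation_def by (simp add: sum.distrib[symmetric] algebra_simps)
  have "subset_expectation (insert i I) q (\<lambda>S. f S * of_bool (i \<in> S))
      = (\<Sum>S\<in>Pow I. q i * subset_weight I q S * f S)"
    unfolding split using i by (auto simp: weight_in f intro!: sum.neutral sum.cong)
  then show "subset_expectation (insert i I) q (\<lambda>S. f S * of_bool (i \<in> S))
      = q i * subset_expectation I q f"
    unfolding subset_expectation_def by (simp add: sum_distrib_left mult.assoc)
qed

lemma subset_expectation_mult_indicator:
  assumes fin: "finite I" and "i \<in> I" "i \<notin> D" and restrict: "\<And>S. f S = f (S \<inter> D)"
  shows "subset_expectation I q (\<lambda>S. f S * of_bool (i \<in> S)) = q i * subset_expectation I q f"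
proof -
  define I' where "I' = I - {i}"
  have I: "I = insert i I'" "i \<notin> I'" "finite I'"
    using assms by (auto simp: I'_def)
  have "f (insert i S) = f S" for S
    using restrict[of "insert i S"] restrict[of S] \<open>i \<notin> D\<close> by simp
  then show ?thesis
    unfolding I(1) using subset_expectation_insert[OF I(3,2), of f q] by simp
qed

lemma subset_expectation_condition:
  assumes "finite I" "i \<in> I" "i \<notin> D" and restrict: "\<And>S b. f S b = f (S \<inter> D) b"
  shows "subset_expectation I q (\<lambda>S. f S (i \<in> S))
       = subset_expectation I q (\<lambda>S. (1 - q i) * f S False + q i * f S True)"
proof -
  have "subset_expectation I q (\<lambda>S. f S (i \<in> S))
      = subset_expectation I q (\<lambda>S. f S False + (f S True - f S False) * of_bool (i \<in> S))"
    by (intro arg_cong[where f = "subset_expectation I q"] ext) simp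
  also have "\<dots> = subset_expectation I q (\<lambda>S. f S False)
      + q i * subset_expectation I q (\<lambda>S. f S True - f S False)"
    using assms(1-3) restrict
    by (simp add: subset_expectation_add subset_expectation_mult_indicator[where D = D])
  also have "\<dots> = subset_expectation I q (\<lambda>S. (1 - q i) * f S False + q i * f S True)"
    by (simp add: subset_expectation_add subset_expectation_diff subset_expectation_cmult
        algebra_simps)
  finally show ?thesis .
qed

context prob_space
begin

lemma prob_realized_set:
  assumes indep: "indep_vars (\<lambda>_. count_space UNIV) X J" and "I \<subseteq> J" "finite I"
    and prob_X: "\<And>i. i \<in> I \<Longrightarrow> prob {\<omega> \<in> space M. X i \<omega>} = q i"
    and "S \<subseteq> I"
  shows "prob {\<omega> \<in> space M. {i \<in> I. X i \<omega>} = S} = subset_weight I q S"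
proof (cases "I = {}")
  case True
  then show ?thesis using \<open>S \<subseteq> I\<close> by (simp add: subset_weight_def prob_space)
next
  case False
  have prob_value: "prob (X i -` {b} \<inter> space M) = (if b then q i else 1 - q i)"
    if "i \<in> I" for i b
  proof -
    have "X i \<in> measurable M (count_space UNIV)"
      using indep \<open>I \<subseteq> J\<close> that unfolding indep_vars_def by auto
    then have event: "{\<omega> \<in> space M. X i \<omega>} \<in> events" by measurable
    have "X i -` {b} \<inter> space M
        = (if b then {\<omega> \<in> space M. X i \<omega>} else space M - {\<omega> \<in> space M. X i \<omega>})"
      by auto
    then show ?thesis using prob_compl[OF event] prob_X[OF that] by simp
  qed
  have "{\<omega> \<in> space M. {i \<in> I. X i \<omega>} = S} = (\<Inter>i\<in>I. X i -` {i \<in> S} \<inter> space M)"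
    using False \<open>S \<subseteq> I\<close> by auto
  then have "prob {\<omega> \<in> space M. {i \<in> I. X i \<omega>} = S}
      = (\<Prod>i\<in>I. prob (X i -` {i \<in> S} \<inter> space M))"
    using indep_varsD[OF indep False \<open>finite I\<close> \<open>I \<subseteq> J\<close>] by simp
  also have "\<dots> = (\<Prod>i\<in>I. if i \<in> S then q i else 1 - q i)"
    by (intro prod.cong) (auto simp: prob_value)
  also have "\<dots> = subset_weight I q S"
    unfolding subset_weight_def using \<open>finite I\<close> \<open>S \<subseteq> I\<close>
    by (simp add: prod.If_cases Int_absorb1 Diff_eq)
  finally show ?thesis .
qed

lemma integral_realized_set:
  assumes indep: "indep_vars (\<lambda>_. count_space UNIV) X J" and "I \<subseteq> J" "finite I"
    and prob_X: "\<And>i. i \<in> I \<Longrightarrow> prob {\<omega> \<in> space M. X i \<omega>} = q i"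
  shows "(\<integral>\<omega>. g {i \<in> I. X i \<omega>} \<partial>M) = subset_expectation I q g"
proof -
  define E where "E S = {\<omega> \<in> space M. {i \<in> I. X i \<omega>} = S}" for S
  have "X i \<in> measurable M (count_space UNIV)" if "i \<in> I" for i
    using indep \<open>I \<subseteq> J\<close> that unfolding indep_vars_def by auto
  then have "{\<omega> \<in> space M. \<forall>i\<in>I. X i \<omega> = (i \<in> S)} \<in> events" for S
    using \<open>finite I\<close> by measurable
  moreover have "E S = {\<omega> \<in> space M. \<forall>i\<in>I. X i \<omega> = (i \<in> S)}" if "S \<subseteq> I" for S
    unfolding E_def using that by auto
  ultimately have E_event: "E S \<in> events" if "S \<subseteq> I" for S
    using that by simp
  have "g {i \<in> I. X i \<omega>} = (\<Sum>S\<in>Pow I. g S * indicator (E S) \<omega>)" if "\<omega> \<in> space M" for \<omega>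
  proof -
    have "(\<Sum>S\<in>Pow I. g S * indicator (E S) \<omega>) = (\<Sum>S\<in>{{i \<in> I. X i \<omega>}}. g S * indicator (E S) \<omega>)"
      using \<open>finite I\<close> that
      by (intro sum.mono_neutral_right) (auto simp: E_def indicator_def)
    then show ?thesis using that by (simp add: E_def)
  qed
  then have "(\<integral>\<omega>. g {i \<in> I. X i \<omega>} \<partial>M) = (\<integral>\<omega>. (\<Sum>S\<in>Pow I. g S * indicator (E S) \<omega>) \<partial>M)"
    by (intro Bochner_Integration.integral_cong) auto
  also have "\<dots> = (\<Sum>S\<in>Pow I. g S * prob (E S))"
  proof (subst Bochner_Integration.integral_sum)
    show "integrable M (\<lambda>\<omega>. g S * indicator (E S) \<omega>)" if "S \<in> Pow I" for S
      using E_event that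
      by (intro integrable_mult_right integrable_real_indicator) (auto simp: less_top[symmetric])
    show "(\<Sum>S\<in>Pow I. \<integral>\<omega>. g S * indicator (E S) \<omega> \<partial>M) = (\<Sum>S\<in>Pow I. g S * prob (E S))"
      using E_event by (intro sum.cong) auto
  qed
  also have "\<dots> = subset_expectation I q g"
    unfolding subset_expectation_def E_def
    by (intro sum.cong) (auto simp: prob_realized_set[OF indep \<open>I \<subseteq> J\<close> \<open>finite I\<close> prob_X])
  finally show ?thesis .
qed

end

section \<open>Context cells and the Hoelder bias\<close>

lemma cell_coord_bounds:
  fixes h :: nat and x :: real
  assumes "h \<ge> 1" "0 \<le> x" "x \<le> 1"
  defines "k \<equiv> min (int h - 1) \<lfloor>real h * x\<rfloor>"
  shows "0 \<le> k" "real_of_int k \<le> real h * x" "real h * x \<le> real_of_int k + 1"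
proof -
  show "0 \<le> k" unfolding k_def using assms by auto
  have "real_of_int k \<le> real_of_int \<lfloor>real h * x\<rfloor>" unfolding k_def by simp
  then show "real_of_int k \<le> real h * x" by linarith
  show "real h * x \<le> real_of_int k + 1"
  proof (cases "\<lfloor>real h * x\<rfloor> \<le> int h - 1")
    case True
    then show ?thesis unfolding k_def by linarith
  next
    case False
    then show ?thesis unfolding k_def using assms by (simp add: mult_left_le)
  qed
qed

lemma same_cell_coord_dist:
  fixes h :: nat and x y :: real
  assumes h: "h \<ge> 1" and x: "0 \<le> x" "x \<le> 1" and y: "0 \<le> y" "y \<le> 1"
    and eq: "nat (min (int h - 1) \<lfloor>real h * x\<rfloor>) = nat (min (int h - 1) \<lfloor>real h * y\<rfloor>)"
  shows "\<bar>x - y\<bar> \<le> 1 / real h"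
proof -
  note x_bounds = cell_coord_bounds[OF h x] and y_bounds = cell_coord_bounds[OF h y]
  have "min (int h - 1) \<lfloor>real h * x\<rfloor> = min (int h - 1) \<lfloor>real h * y\<rfloor>"
    using eq x_bounds(1) y_bounds(1) by (simp add: eq_nat_nat_iff)
  then have "\<bar>real h * (x - y)\<bar> \<le> 1"
    using x_bounds(2,3) y_bounds(2,3) by (simp add: right_diff_distrib)
  then show ?thesis
    using h by (simp add: le_divide_eq abs_mult mult.commute)
qed

lemma same_cell_dist_powr_le:
  fixes h :: nat and v w :: "real \<times> real"
  assumes h: "h \<ge> 1" and v: "v \<in> {0..1} \<times> {0..1}" and w: "w \<in> {0..1} \<times> {0..1}"
    and eq: "cell h v = cell h w" and "\<alpha> > 0"
  shows "norm (v - w) powr \<alpha> \<le> 2 powr (\<alpha> / 2) * real h powr (- \<alpha>)"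
proof -
  obtain a b c d where vw: "v = (a, b)" "w = (c, d)" by (cases v, cases w) auto
  have "\<bar>a - c\<bar> \<le> 1 / real h" "\<bar>b - d\<bar> \<le> 1 / real h"
    using v w eq same_cell_coord_dist[OF h] unfolding vw cell_def by auto
  then have "(a - c)\<^sup>2 + (b - d)\<^sup>2 \<le> (1 / real h)\<^sup>2 + (1 / real h)\<^sup>2"
    by (intro add_mono; metis abs_ge_zero power2_abs power_mono)
  then have "norm (v - w) \<le> sqrt (2 * (1 / real h)\<^sup>2)"
    unfolding vw by (simp add: norm_Pair)
  also have "\<dots> = sqrt 2 / real h"
    by (simp add: real_sqrt_mult real_sqrt_divide)
  finally have "norm (v - w) \<le> sqrt 2 / real h" .
  then have "norm (v - w) powr \<alpha> \<le> (sqrt 2 / real h) powr \<alpha>"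
    using \<open>\<alpha> > 0\<close> by (intro powr_mono2) auto
  also have "\<dots> = 2 powr (\<alpha> / 2) * real h powr (- \<alpha>)"
    by (simp add: powr_divide powr_minus_divide powr_half_sqrt[symmetric] powr_powr)
  finally show ?thesis .
qed

lemma hoelder_same_cell:
  fixes f :: "real \<times> real \<Rightarrow> real" and h :: nat
  assumes "h \<ge> 1" "v \<in> {0..1} \<times> {0..1}" "w \<in> {0..1} \<times> {0..1}" "cell h v = cell h w"
    and "0 \<le> L" "0 < \<alpha>" and hoelder: "\<bar>f v - f w\<bar> \<le> L * norm (v - w) powr \<alpha>"
  shows "\<bar>f v - f w\<bar> \<le> L * 2 powr (\<alpha> / 2) * real h powr (- \<alpha>)"
proof -
  have "L * norm (v - w) powr \<alpha> \<le> L * (2 powr (\<alpha> / 2) * real h powr (- \<alpha>))"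
    using assms by (intro mult_left_mono same_cell_dist_powr_le) auto
  then show ?thesis
    using hoelder by (simp only: mult.assoc)
qed

lemma powr_Suc_le_diff:
  fixes x \<theta> :: real
  assumes "x \<ge> 1" "-1 < \<theta>" "\<theta> < 0"
  shows "(x + 1) powr \<theta> \<le> ((x + 1) powr (1 + \<theta>) - x powr (1 + \<theta>)) / (1 + \<theta>)"
proof -
  have "((\<lambda>u. u powr (1 + \<theta>)) has_real_derivative (1 + \<theta>) * u powr \<theta>) (at u)" if "u > 0" for u
    using has_real_derivative_powr[OF that, of "1 + \<theta>"] by simp
  then have "\<exists>\<xi>. x < \<xi> \<and> \<xi> < x + 1 \<and>
      (x + 1) powr (1 + \<theta>) - x powr (1 + \<theta>) = (x + 1 - x) * ((1 + \<theta>) * \<xi> powr \<theta>)"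
    using assms(1) by (intro MVT2) auto
  then obtain \<xi> where \<xi>: "x < \<xi>" "\<xi> < x + 1"
    and mvt: "(x + 1) powr (1 + \<theta>) - x powr (1 + \<theta>) = (1 + \<theta>) * \<xi> powr \<theta>"
    by auto
  have "(x + 1) powr \<theta> \<le> \<xi> powr \<theta>"
    using \<xi> assms by (intro powr_mono2') auto
  then show ?thesis
    using mvt assms by (simp add: le_divide_eq mult.commute)
qed

lemma sum_powr_le:
  fixes \<theta> :: real
  assumes "-1 < \<theta>" "\<theta> < 0"
  shows "(\<Sum>t = 1..T. real t powr \<theta>) \<le> real T powr (1 + \<theta>) / (1 + \<theta>)"
proof (induction T)
  case 0
  then show ?case by simp
next
  case (Suc T)
  show ?case
  proof (cases "T = 0")
    case True
    then show ?thesis using assms by (simp add: field_simps)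
  next
    case False
    then have "real (Suc T) powr \<theta> \<le> (real (Suc T) powr (1 + \<theta>) - real T powr (1 + \<theta>)) / (1 + \<theta>)"
      using powr_Suc_le_diff[of "real T" \<theta>] assms by (simp add: add.commute)
    then show ?thesis
      using Suc.IH by (simp add: diff_divide_distrib)
  qed
qed

lemma abs_le_square_div_add_half:
  fixes x a :: real
  assumes "a > 0"
  shows "\<bar>x\<bar> \<le> x\<^sup>2 / (2 * a) + a / 2"
proof -
  have "2 * a * \<bar>x\<bar> \<le> x\<^sup>2 + a\<^sup>2"
    using sum_squares_bound[of "\<bar>x\<bar>" a] by (simp add: power2_eq_square algebra_simps)
  then show ?thesis
    using assms by (simp add: field_simps power2_eq_square)
qed

lemma exploration_tradeoff:
  fixes t :: nat and z :: real
  assumes t: "t \<ge> 1" and z: "z > 0"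
  defines "u \<equiv> real t powr (- z / 2)"
  shows "1 / (2 * (2 * u) * max (real t powr z * ln (real t)) 1) + 2 * u / 2 \<le> 2 * u"
proof -
  define K' where "K' = max (real t powr z * ln (real t)) 1"
  have "real t powr z \<le> 4 * K'"
  proof (cases "t = 1")
    case False
    then have "ln 2 \<le> ln (real t)"
      using t by simp
    then have "1 / 4 \<le> ln (real t)"
      using ln2_ge_two_thirds by linarith
    then have "real t powr z \<le> 4 * (real t powr z * ln (real t))"
      using mult_left_mono[of "1 / 4" "ln (real t)" "real t powr z"] by simp
    then show ?thesis unfolding K'_def by linarith
  qed (simp add: K'_def)
  have "0 < u" unfolding u_def using t by simp
  have "real t powr z * (u * u) = 1"
    unfolding u_def using t by (simp add: powr_add[symmetric])
  then have "1 \<le> 4 * K' * (u * u)"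
    using \<open>real t powr z \<le> 4 * K'\<close> mult_right_mono[of "real t powr z" "4 * K'" "u * u"] by simp
  then have "1 / (4 * u * K') \<le> u"
    using \<open>0 < u\<close> by (simp add: K'_def divide_le_eq algebra_simps)
  then show ?thesis unfolding K'_def[symmetric] by (simp add: algebra_simps)
qed

section \<open>A potential for the deviation of a running mean\<close>

text \<open>\<open>D\<close> is the deviation of a running sum of Bernoulli observations from the sum of their means
  after \<open>c\<close> samples. The budget term pays for the variance \<open>q (1 - q) \<le> 1/4\<close> of each new sample,
  so the potential is a supermartingale starting at \<open>1/K\<close>; once \<open>c \<ge> K\<close> it dominates \<open>(D / c)\<^sup>2\<close>.\<close>

definition dev_weight :: "real \<Rightarrow> nat \<Rightarrow> real" where
  "dev_weight K c = 1 / (max (real c) K)\<^sup>2"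

definition dev_budget :: "real \<Rightarrow> nat \<Rightarrow> real" where
  "dev_budget K c = (if real c \<le> K then (4 * K - real c) / K\<^sup>2 else 1 / real c)"

definition dev_potential :: "real \<Rightarrow> real \<Rightarrow> nat \<Rightarrow> real" where
  "dev_potential K D c = D\<^sup>2 * dev_weight K c + dev_budget K c / 4"

lemma dev_weight_Suc_le: "1 \<le> K \<Longrightarrow> dev_weight K (Suc c) \<le> dev_weight K c"
  unfolding dev_weight_def by (intro divide_left_mono power_mono) (auto simp: max_def)

lemma dev_budget_Suc_le:
  assumes K: "1 \<le> K"
  shows "dev_weight K (Suc c) + dev_budget K (Suc c) \<le> dev_budget K c"
proof -
  consider "real c + 1 \<le> K" | "real c \<le> K" "K < real c + 1" | "K < real c" by linarith
  then show ?thesis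
  proof cases
    case 1
    then have "1 / K\<^sup>2 + (4 * K - (1 + real c)) / K\<^sup>2 = (4 * K - real c) / K\<^sup>2"
      by (simp flip: add_divide_distrib)
    then show ?thesis
      using 1 unfolding dev_weight_def dev_budget_def by (simp add: max_def)
  next
    case 2
    moreover have "real c + 1 \<le> (real c + 1)\<^sup>2"
      using mult_left_mono[of 1 "real c + 1" "real c + 1"] by (simp add: power2_eq_square)
    ultimately have "K \<le> (real c + 1)\<^sup>2" by linarith
    then have "1 / (real c + 1)\<^sup>2 \<le> 1 / K" "1 / (real c + 1) \<le> 1 / K"
      using 2 K by (auto intro!: divide_left_mono)
    moreover have "3 / K \<le> (4 * K - real c) / K\<^sup>2"
      using 2 K by (simp add: field_simps power2_eq_square)
    moreover have "1 / K + 1 / K \<le> 3 / K"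
      using K by (simp add: divide_right_mono flip: add_divide_distrib)
    ultimately have "1 / (real c + 1)\<^sup>2 + 1 / (real c + 1) \<le> (4 * K - real c) / K\<^sup>2"
      by linarith
    then show ?thesis
      using 2 unfolding dev_weight_def dev_budget_def by (simp add: max_def add.commute)
  next
    case 3
    then have "1 / (real c + 1)\<^sup>2 \<le> 1 / real c - 1 / (real c + 1)"
      using K by (simp add: divide_simps power2_eq_square)
    then show ?thesis
      using 3 unfolding dev_weight_def dev_budget_def by (simp add: max_def add.commute)
  qed
qed

lemma dev_potential_nonneg: "1 \<le> K \<Longrightarrow> 0 \<le> dev_potential K D c"
  unfolding dev_potential_def dev_weight_def dev_budget_def by simp

lemma dev_potential_0: "1 \<le> K \<Longrightarrow> dev_potential K 0 0 = 1 / K"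
  unfolding dev_potential_def dev_budget_def by (simp add: power2_eq_square)

lemma square_div_le_dev_potential:
  assumes "1 \<le> K" "K \<le> real c"
  shows "(D / real c)\<^sup>2 \<le> dev_potential K D c"
  using assms unfolding dev_potential_def dev_weight_def dev_budget_def
  by (simp add: max_def power_divide)

lemma dev_potential_step:
  assumes K: "1 \<le> K" and q: "q \<in> {0..1}"
  shows "(1 - q) * dev_potential K (D - q) (Suc c) + q * dev_potential K (D + 1 - q) (Suc c)
         \<le> dev_potential K D c"
proof -
  define w where "w = dev_weight K (Suc c)"
  have "0 \<le> w" unfolding w_def dev_weight_def by simp
  have variance: "(1 - q) * (D - q)\<^sup>2 + q * (D + 1 - q)\<^sup>2 = D\<^sup>2 + q * (1 - q)"
    by (simp add: power2_eq_square algebra_simps)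
  have "q * (1 - q) \<le> 1 / 4"
    using sum_squares_bound[of q "1 - q"] by (simp add: power2_eq_square algebra_simps)
  then have "(D\<^sup>2 + q * (1 - q)) * w \<le> (D\<^sup>2 + 1 / 4) * w"
    using \<open>0 \<le> w\<close> by (intro mult_right_mono) auto
  moreover have "(1 - q) * dev_potential K (D - q) (Suc c) + q * dev_potential K (D + 1 - q) (Suc c)
      = ((1 - q) * (D - q)\<^sup>2 + q * (D + 1 - q)\<^sup>2) * w + dev_budget K (Suc c) / 4"
    unfolding dev_potential_def w_def by (simp add: algebra_simps add_divide_distrib[symmetric])
  ultimately have "(1 - q) * dev_potential K (D - q) (Suc c) + q * dev_potential K (D + 1 - q) (Suc c)
      \<le> D\<^sup>2 * w + (w + dev_budget K (Suc c)) / 4"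
    unfolding variance by (simp add: algebra_simps add_divide_distrib)
  also have "\<dots> \<le> dev_potential K D c"
    unfolding dev_potential_def w_def using dev_weight_Suc_le[OF K] dev_budget_Suc_le[OF K]
    by (intro add_mono mult_left_mono divide_right_mono) auto
  finally show ?thesis .
qed

lemma sum_diff_le_sum_abs:
  fixes g :: "'a \<Rightarrow> real"
  assumes "finite U" "A \<subseteq> U" "B \<subseteq> U"
  shows "sum g A - sum g B \<le> (\<Sum>x\<in>U. \<bar>g x\<bar>)"
proof -
  have "sum g A \<le> (\<Sum>x\<in>U. max (g x) 0)"
    using assms by (intro order.trans[OF sum_mono sum_mono2]) (auto intro: finite_subset)
  moreover have "- sum g B \<le> (\<Sum>x\<in>U. max (- g x) 0)"
    using assms by (subst sum_negf[symmetric], intro order.trans[OF sum_mono sum_mono2])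
      (auto intro: finite_subset)
  moreover have "(\<Sum>x\<in>U. max (g x) 0) + (\<Sum>x\<in>U. max (- g x) 0) = (\<Sum>x\<in>U. \<bar>g x\<bar>)"
    unfolding sum.distrib[symmetric] by (intro sum.cong) auto
  ultimately show ?thesis by linarith
qed

lemma util_cong:
  "(\<And>m n. m \<in> {1..M} \<Longrightarrow> n \<in> s m \<Longrightarrow> v n m = w n m) \<Longrightarrow> util M s v = util M s w"
  unfolding util_def by simp

lemma util_diff: "util M s v - util M s w = util M s (\<lambda>n m. v n m - w n m)"
  unfolding util_def by (simp add: sum_subtractf right_diff_distrib)

lemma util_diff_le_sum_abs:
  assumes "\<And>m. m \<in> {1..M} \<Longrightarrow> finite (A m)"
    and "\<And>m. m \<in> {1..M} \<Longrightarrow> s m \<subseteq> A m" "\<And>m. m \<in> {1..M} \<Longrightarrow> s' m \<subseteq> A m"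
  shows "util M s v - util M s' v \<le> 1 / real M * (\<Sum>m\<in>{1..M}. \<Sum>n\<in>A m. \<bar>v n m\<bar>)"
  unfolding util_def right_diff_distrib[symmetric] sum_subtractf[symmetric]
  using assms by (intro mult_left_mono sum_mono sum_diff_le_sum_abs) auto

lemma util_sum_indicator:
  assumes "\<And>m. m \<in> {1..M} \<Longrightarrow> finite (A m)" "\<And>m. m \<in> {1..M} \<Longrightarrow> s m \<subseteq> A m"
  shows "util M s v = 1 / real M * (\<Sum>m\<in>{1..M}. \<Sum>n\<in>A m. of_bool (n \<in> s m) * v n m)"
proof -
  have "(\<Sum>n\<in>s m. v n m) = (\<Sum>n\<in>A m. of_bool (n \<in> s m) * v n m)" if "m \<in> {1..M}" for m
  proof -
    have "(\<Sum>n\<in>s m. v n m) = (\<Sum>n\<in>A m \<inter> s m. v n m)"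
      using assms(2)[OF that] by (simp add: Int_absorb1)
    also have "\<dots> = (\<Sum>n\<in>A m. of_bool (n \<in> s m) * v n m)"
      unfolding sum.inter_restrict[OF assms(1)[OF that]] by (intro sum.cong) auto
    finally show ?thesis .
  qed
  then show ?thesis unfolding util_def by simp
qed

lemma feasible_subset: "feasible M Nset cost B t s \<Longrightarrow> m \<in> {1..M} \<Longrightarrow> s m \<subseteq> Nset m t"
  unfolding feasible_def by blast

lemma feasible_outside: "feasible M Nset cost B t s \<Longrightarrow> m \<notin> {1..M} \<Longrightarrow> s m = {}"
  unfolding feasible_def by blast

lemma feasible_empty_if_costs_exceed_budget:
  assumes feas: "feasible M Nset cost B t s" and m: "m \<in> {1..M}" and "finite (Nset m t)"
    and "0 \<le> B" and exceed: "\<And>n. n \<in> Nset m t \<Longrightarrow> B < cost n t"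
  shows "s m = {}"
proof (rule ccontr)
  assume "s m \<noteq> {}"
  then obtain n where n: "n \<in> s m" by auto
  have sub: "s m \<subseteq> Nset m t" using feasible_subset[OF feas m] .
  then have "cost n t \<le> (\<Sum>k\<in>s m. cost k t)"
    using n exceed \<open>0 \<le> B\<close> \<open>finite (Nset m t)\<close>
    by (intro member_le_sum) (auto intro: finite_subset less_imp_le order.strict_trans1)
  also have "\<dots> \<le> B" using feas m unfolding feasible_def by blast
  finally show False using exceed n sub by force
qed

lemma Min_cost_le:
  fixes cost :: "nat \<Rightarrow> nat \<Rightarrow> real"
  assumes "n \<in> {1..N}" "t \<in> {1..T}"
  shows "Min {cost i j | i j. i \<in> {1..N} \<and> j \<in> {1..T}} \<le> cost n t"
proof -
  have "{cost i j | i j. i \<in> {1..N} \<and> j \<in> {1..T}} = (\<lambda>(i, j). cost i j) ` ({1..N} \<times> {1..T})"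
    by force
  moreover have "cost n t \<in> (\<lambda>(i, j). cost i j) ` ({1..N} \<times> {1..T})"
    using assms by force
  ultimately show ?thesis by simp
qed

lemma Min_cost_pos:
  fixes cost :: "nat \<Rightarrow> nat \<Rightarrow> real"
  assumes "N \<ge> 1" "T \<ge> 1" "\<And>n t. 0 < cost n t"
  shows "0 < Min {cost i j | i j. i \<in> {1..N} \<and> j \<in> {1..T}}"
proof -
  have "{cost i j | i j. i \<in> {1..N} \<and> j \<in> {1..T}} = (\<lambda>(i, j). cost i j) ` ({1..N} \<times> {1..T})"
    by force
  then show ?thesis using assms by (subst Min_gr_iff) auto
qed

section \<open>Runs of the policy\<close>

locale cocs_run =
  fixes M N T :: nat and Nset :: "nat \<Rightarrow> nat \<Rightarrow> nat set" and cost :: "nat \<Rightarrow> nat \<Rightarrow> real"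
    and B :: real and K :: "nat \<Rightarrow> real" and lc :: "nat \<Rightarrow> nat \<Rightarrow> nat \<Rightarrow> nat \<times> nat"
    and pick :: "nat \<Rightarrow> cocs_state \<Rightarrow> decision" and q :: "nat \<Rightarrow> nat \<Rightarrow> nat \<Rightarrow> real"
  assumes policy: "cocs_rule M Nset cost B K lc pick"
    and Nset_subset: "\<And>m t. Nset m t \<subseteq> {1..N}"
    and q_range: "\<And>t n m. m \<in> {1..M} \<Longrightarrow> n \<in> Nset m t \<Longrightarrow> q t n m \<in> {0..1}"
begin

lemma finite_Nset: "finite (Nset m t)"
  using Nset_subset finite_subset by blast

lemma pick_feasible: "t \<ge> 1 \<Longrightarrow> feasible M Nset cost B t (pick t \<sigma>)"
  using policy unfolding cocs_rule_def Let_def by (simp del: split_paired_All split: if_splits)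

lemma pick_exploit:
  assumes "t \<ge> 1" "\<not> exploration_round M Nset K lc t \<sigma>" "feasible M Nset cost B t s"
  shows "util M s (\<lambda>n m. est_p \<sigma> n m (lc t n m)) \<le> util M (pick t \<sigma>) (\<lambda>n m. est_p \<sigma> n m (lc t n m))"
  using policy assms unfolding cocs_rule_def Let_def by (simp del: split_paired_All)

lemma cocs_st_cong:
  assumes "\<And>t n m. t \<in> {1..r} \<Longrightarrow> m \<in> {1..M} \<Longrightarrow> n \<in> Nset m t \<Longrightarrow> X t n m \<omega> = X' t n m \<omega>'"
  shows "cocs_st pick lc X \<omega> r = cocs_st pick lc X' \<omega>' r"
  using assms
proof (induction r)
  case (Suc r)
  then have IH: "cocs_st pick lc X \<omega> r = cocs_st pick lc X' \<omega>' r" by simp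
  define s where "s = pick (Suc r) (cocs_st pick lc X' \<omega>' r)"
  have "X (Suc r) n m \<omega> = X' (Suc r) n m \<omega>'" if "n \<in> s m" for n m
  proof -
    have m: "m \<in> {1..M}"
      using that feasible_outside[OF pick_feasible[of "Suc r"]] unfolding s_def by fastforce
    then have "n \<in> Nset m (Suc r)"
      using that feasible_subset[OF pick_feasible[of "Suc r" "cocs_st pick lc X' \<omega>' r"] m]
      unfolding s_def by auto
    then show ?thesis using Suc.prems m by simp
  qed
  then show ?case
    unfolding cocs_st.simps IH s_def[symmetric] cocs_update_def by (auto simp: fun_eq_iff)
qed simp

text \<open>A run of the policy is a deterministic function of the set \<open>S\<close> of triples \<open>(t, n, m)\<close>
  whose participation indicator is \<open>1\<close>, and \<^const>\<open>subset_expectation\<close> over \<open>S\<close> is the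
  expectation over the indicators.\<close>

definition triples :: "(nat \<times> nat \<times> nat) set" where
  "triples = {(t, n, m). t \<in> {1..T} \<and> m \<in> {1..M} \<and> n \<in> Nset m t}"

definition triple_prob :: "nat \<times> nat \<times> nat \<Rightarrow> real" where
  "triple_prob = (\<lambda>(t, n, m). q t n m)"

abbreviation expect :: "((nat \<times> nat \<times> nat) set \<Rightarrow> real) \<Rightarrow> real" where
  "expect \<equiv> subset_expectation triples triple_prob"

definition run_state :: "(nat \<times> nat \<times> nat) set \<Rightarrow> nat \<Rightarrow> cocs_state" where
  "run_state S = cocs_st pick lc (\<lambda>t n m _. (t, n, m) \<in> S) ()"

definition run_dec :: "(nat \<times> nat \<times> nat) set \<Rightarrow> nat \<Rightarrow> decision" where
  "run_dec S t = pick t (run_state S (t - 1))"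

definition rounds_before :: "nat \<Rightarrow> (nat \<times> nat \<times> nat) set" where
  "rounds_before r = {(j, n, m). j < r}"

lemma finite_triples: "finite triples"
proof -
  have "triples \<subseteq> {1..T} \<times> {1..N} \<times> {1..M}"
    unfolding triples_def using Nset_subset by auto
  then show ?thesis by (rule finite_subset) auto
qed

lemma expect_mono: "(\<And>S. S \<subseteq> triples \<Longrightarrow> f S \<le> g S) \<Longrightarrow> expect f \<le> expect g"
  using q_range by (intro subset_expectation_mono) (auto simp: triples_def triple_prob_def)

lemma run_state_restrict: "j < r \<Longrightarrow> run_state S j = run_state (S \<inter> rounds_before r) j"
  unfolding run_state_def by (rule cocs_st_cong) (auto simp: rounds_before_def)

lemma run_state_0: "run_state S 0 = ((\<lambda>_ _ _. 0), (\<lambda>_ _ _. 0))"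
  by (simp add: run_state_def)

lemma run_dec_restrict:
  assumes "j \<le> r"
  shows "run_dec S j = run_dec (S \<inter> rounds_before r) j"
proof (cases j)
  case (Suc k)
  then show ?thesis using assms run_state_restrict[of k r S] by (simp add: run_dec_def)
qed (simp add: run_dec_def run_state_0)

lemma run_dec_subset: "t \<ge> 1 \<Longrightarrow> m \<in> {1..M} \<Longrightarrow> run_dec S t m \<subseteq> Nset m t"
  unfolding run_dec_def using feasible_subset[OF pick_feasible] by blast

lemma run_dec_outside: "t \<ge> 1 \<Longrightarrow> m \<notin> {1..M} \<Longrightarrow> run_dec S t m = {}"
  unfolding run_dec_def using feasible_outside[OF pick_feasible] by blast

definition selected :: "(nat \<times> nat \<times> nat) set \<Rightarrow> nat \<Rightarrow> nat \<Rightarrow> nat \<Rightarrow> nat \<times> nat \<Rightarrow> bool" where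
  "selected S j n m l \<longleftrightarrow> n \<in> run_dec S j m \<and> lc j n m = l"

lemma selected_restrict: "j \<le> r \<Longrightarrow> selected S j n m l = selected (S \<inter> rounds_before r) j n m l"
  unfolding selected_def by (simp add: run_dec_restrict[of j r S])

lemma selected_imp_Nset: "selected S j n m l \<Longrightarrow> j \<ge> 1 \<Longrightarrow> m \<in> {1..M} \<and> n \<in> Nset m j"
  unfolding selected_def using run_dec_subset run_dec_outside by blast

lemma run_count_Suc:
  "fst (run_state S (Suc r)) n m l = fst (run_state S r) n m l + of_bool (selected S (Suc r) n m l)"
  by (simp add: run_state_def run_dec_def selected_def cocs_update_def)

lemma run_sum_Suc:
  "snd (run_state S (Suc r)) n m l
     = snd (run_state S r) n m l + of_bool (selected S (Suc r) n m l \<and> (Suc r, n, m) \<in> S)"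
  by (simp add: run_state_def run_dec_def selected_def cocs_update_def conj_assoc)

lemma run_count_eq_sum:
  "real (fst (run_state S r) n m l) = (\<Sum>j = 1..r. of_bool (selected S j n m l))"
  by (induction r) (simp_all add: run_state_0 run_count_Suc sum.cl_ivl_Suc)

definition compensator :: "(nat \<times> nat \<times> nat) set \<Rightarrow> nat \<Rightarrow> nat \<Rightarrow> nat \<Rightarrow> nat \<times> nat \<Rightarrow> real" where
  "compensator S r n m l = (\<Sum>j = 1..r. of_bool (selected S j n m l) * q j n m)"

definition deviation :: "(nat \<times> nat \<times> nat) set \<Rightarrow> nat \<Rightarrow> nat \<Rightarrow> nat \<Rightarrow> nat \<times> nat \<Rightarrow> real" where
  "deviation S r n m l = snd (run_state S r) n m l - compensator S r n m l"

lemma deviation_0: "deviation S 0 n m l = 0"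
  by (simp add: deviation_def compensator_def run_state_0)

lemma deviation_Suc:
  "deviation S (Suc r) n m l = deviation S r n m l
     + of_bool (selected S (Suc r) n m l) * (of_bool ((Suc r, n, m) \<in> S) - q (Suc r) n m)"
  by (cases "selected S (Suc r) n m l"; cases "(Suc r, n, m) \<in> S")
    (simp_all add: deviation_def compensator_def run_sum_Suc sum.cl_ivl_Suc)

lemma deviation_restrict: "deviation S r n m l = deviation (S \<inter> rounds_before (Suc r)) r n m l"
proof -
  have "compensator S r n m l = compensator (S \<inter> rounds_before (Suc r)) r n m l"
    unfolding compensator_def by (intro sum.cong) (auto simp: selected_restrict[of _ "Suc r" S])
  then show ?thesis
    unfolding deviation_def using run_state_restrict[of r "Suc r" S] by simp
qed

lemma expected_dev_potential_Suc_le: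
  assumes "Suc r \<le> T" and m: "m \<in> {1..M}" and K: "1 \<le> K'"
  shows "expect (\<lambda>S. dev_potential K' (deviation S (Suc r) n m l) (fst (run_state S (Suc r)) n m l))
       \<le> expect (\<lambda>S. dev_potential K' (deviation S r n m l) (fst (run_state S r) n m l))"
proof -
  define i where "i = (Suc r, n, m)"
  define F where "F S b = (if selected S (Suc r) n m l
      then dev_potential K' (deviation S r n m l + of_bool b - q (Suc r) n m)
             (Suc (fst (run_state S r) n m l))
      else dev_potential K' (deviation S r n m l) (fst (run_state S r) n m l))" for S b
  have potential_Suc:
    "dev_potential K' (deviation S (Suc r) n m l) (fst (run_state S (Suc r)) n m l) = F S (i \<in> S)" for S
    by (simp add: F_def i_def deviation_Suc run_count_Suc add_diff_eq)
  have step: "(1 - q (Suc r) n m) * F S False + q (Suc r) n m * F S True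
      \<le> dev_potential K' (deviation S r n m l) (fst (run_state S r) n m l)" for S
  proof (cases "selected S (Suc r) n m l")
    case True
    then have "q (Suc r) n m \<in> {0..1}" using q_range selected_imp_Nset[OF True] by simp
    from dev_potential_step[OF K this] show ?thesis using True by (simp add: F_def)
  qed (simp add: F_def algebra_simps)
  show ?thesis
  proof (cases "n \<in> Nset m (Suc r)")
    case True
    then have "i \<in> triples" using assms unfolding i_def triples_def by auto
    have "F S b = F (S \<inter> rounds_before (Suc r)) b" for S b
      unfolding F_def using selected_restrict[of "Suc r" "Suc r" S] deviation_restrict[of S r]
        run_state_restrict[of r "Suc r" S] by simp
    then have "expect (\<lambda>S. F S (i \<in> S))
        = expect (\<lambda>S. (1 - triple_prob i) * F S False + triple_prob i * F S True)"
      using subset_expectation_condition[OF finite_triples \<open>i \<in> triples\<close>, of "rounds_before (Suc r)" F]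
      by (simp add: i_def rounds_before_def)
    also have "\<dots> \<le> expect (\<lambda>S. dev_potential K' (deviation S r n m l) (fst (run_state S r) n m l))"
      using step by (intro expect_mono) (simp add: triple_prob_def i_def)
    finally show ?thesis unfolding potential_Suc .
  next
    case False
    then have "\<not> selected S (Suc r) n m l" for S using selected_imp_Nset[of S "Suc r" n m l] by auto
    then show ?thesis by (simp add: deviation_Suc run_count_Suc)
  qed
qed

lemma expected_dev_potential_le:
  assumes "r \<le> T" and "m \<in> {1..M}" and "1 \<le> K'"
  shows "expect (\<lambda>S. dev_potential K' (deviation S r n m l) (fst (run_state S r) n m l)) \<le> 1 / K'"
  using assms(1)
proof (induction r)
  case 0
  then show ?case
    using assms(3)
    by (simp add: deviation_0 run_state_0 dev_potential_0 subset_expectation_const[OF finite_triples])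
next
  case (Suc r)
  then have "r \<le> T" by simp
  then show ?case
    by (rule order.trans[OF expected_dev_potential_Suc_le[OF Suc.prems assms(2,3)] Suc.IH])
qed

lemma compensator_bias:
  assumes "\<And>j. j \<in> {1..r} \<Longrightarrow> selected S j n m l \<Longrightarrow> \<bar>q j n m - x\<bar> \<le> \<beta>"
  shows "\<bar>compensator S r n m l - real (fst (run_state S r) n m l) * x\<bar>
         \<le> real (fst (run_state S r) n m l) * \<beta>"
proof -
  have "\<bar>compensator S r n m l - real (fst (run_state S r) n m l) * x\<bar>
      = \<bar>\<Sum>j = 1..r. of_bool (selected S j n m l) * (q j n m - x)\<bar>"
    unfolding compensator_def run_count_eq_sum
    by (simp add: sum_distrib_right sum_subtractf right_diff_distrib)
  also have "\<dots> \<le> (\<Sum>j = 1..r. of_bool (selected S j n m l) * \<beta>)"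
    using assms by (intro order.trans[OF sum_abs sum_mono]) auto
  finally show ?thesis
    unfolding run_count_eq_sum by (simp add: sum_distrib_right)
qed

lemma estimation_error_le_dev_potential:
  assumes K: "1 \<le> K'" "K' \<le> real (fst (run_state S r) n m l)" and "0 < a"
    and bias: "\<And>j. j \<in> {1..r} \<Longrightarrow> selected S j n m l \<Longrightarrow> \<bar>q j n m - x\<bar> \<le> \<beta>"
  shows "\<bar>x - est_p (run_state S r) n m l\<bar>
         \<le> \<beta> + dev_potential K' (deviation S r n m l) (fst (run_state S r) n m l) / (2 * a) + a / 2"
proof -
  define C where "C = real (fst (run_state S r) n m l)"
  have "0 < C" using K unfolding C_def by linarith
  have "\<bar>compensator S r n m l - C * x\<bar> \<le> C * \<beta>"
    unfolding C_def by (rule compensator_bias[OF bias])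
  moreover have "compensator S r n m l / C - x = (compensator S r n m l - C * x) / C"
    using \<open>0 < C\<close> by (simp add: field_simps)
  ultimately have "\<bar>compensator S r n m l / C - x\<bar> \<le> \<beta>"
    using \<open>0 < C\<close> by (simp add: divide_le_eq mult.commute)
  moreover have "x - est_p (run_state S r) n m l = - (deviation S r n m l / C) - (compensator S r n m l / C - x)"
    using \<open>0 < C\<close> unfolding est_p_def deviation_def C_def by (simp add: diff_divide_distrib)
  ultimately have "\<bar>x - est_p (run_state S r) n m l\<bar> \<le> \<bar>deviation S r n m l / C\<bar> + \<beta>"
    by linarith
  also have "\<dots> \<le> (deviation S r n m l / C)\<^sup>2 / (2 * a) + a / 2 + \<beta>"
    using abs_le_square_div_add_half[OF \<open>0 < a\<close>, of "deviation S r n m l / C"] by linarith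
  also have "\<dots> \<le> dev_potential K' (deviation S r n m l) (fst (run_state S r) n m l) / (2 * a) + a / 2 + \<beta>"
    using square_div_le_dev_potential[OF K] \<open>0 < a\<close> unfolding C_def by (simp add: divide_right_mono)
  finally show ?thesis by simp
qed

lemma explored_estimation_error_le:
  fixes S :: "(nat \<times> nat \<times> nat) set"
  assumes "t \<ge> 1" "0 \<le> K t" "0 < a" "0 \<le> \<beta>"
    and bias: "\<And>j. j \<in> {1..<t} \<Longrightarrow> n \<in> Nset m j \<Longrightarrow> lc j n m = lc t n m
                 \<Longrightarrow> \<bar>q j n m - q t n m\<bar> \<le> \<beta>"
  defines "C \<equiv> fst (run_state S (t - 1)) n m (lc t n m)"
  shows "\<bar>q t n m - est_p (run_state S (t - 1)) n m (lc t n m)\<bar> * of_bool (K t < real C)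
         \<le> \<beta> + a / 2 + 1 / (2 * a) * dev_potential (max (K t) 1) (deviation S (t - 1) n m (lc t n m)) C"
proof (cases "K t < real C")
  case True
  then have "C \<noteq> 0" using \<open>0 \<le> K t\<close> by auto
  with True have K_le: "max (K t) 1 \<le> real C" by simp
  have bias_run: "\<bar>q j n m - q t n m\<bar> \<le> \<beta>" if "j \<in> {1..t - 1}" "selected S j n m (lc t n m)" for j
    using that selected_imp_Nset[of S j n m "lc t n m"] bias[of j] \<open>t \<ge> 1\<close>
    unfolding selected_def by auto
  have "\<bar>q t n m - est_p (run_state S (t - 1)) n m (lc t n m)\<bar>
      \<le> \<beta> + dev_potential (max (K t) 1) (deviation S (t - 1) n m (lc t n m)) C / (2 * a) + a / 2"
    using estimation_error_le_dev_potential[OF _ K_le[unfolded C_def] \<open>0 < a\<close> bias_run]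
    unfolding C_def by simp
  then show ?thesis using True by simp
next
  case False
  then show ?thesis
    using dev_potential_nonneg[of "max (K t) 1"] \<open>0 < a\<close> \<open>0 \<le> \<beta>\<close> by simp
qed

lemma expected_estimation_error_le:
  assumes t: "t \<in> {1..T}" and m: "m \<in> {1..M}" and "0 \<le> K t" "0 < a" "0 \<le> \<beta>"
    and bias: "\<And>j. j \<in> {1..<t} \<Longrightarrow> n \<in> Nset m j \<Longrightarrow> lc j n m = lc t n m
                 \<Longrightarrow> \<bar>q j n m - q t n m\<bar> \<le> \<beta>"
  shows "expect (\<lambda>S. \<bar>q t n m - est_p (run_state S (t - 1)) n m (lc t n m)\<bar>
                    * of_bool (K t < real (fst (run_state S (t - 1)) n m (lc t n m))))
         \<le> \<beta> + 1 / (2 * a * max (K t) 1) + a / 2"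
proof -
  define K' where "K' = max (K t) 1"
  let ?potential = "\<lambda>S. dev_potential K' (deviation S (t - 1) n m (lc t n m))
                         (fst (run_state S (t - 1)) n m (lc t n m))"
  have "expect (\<lambda>S. \<bar>q t n m - est_p (run_state S (t - 1)) n m (lc t n m)\<bar>
                    * of_bool (K t < real (fst (run_state S (t - 1)) n m (lc t n m))))
      \<le> expect (\<lambda>S. \<beta> + a / 2 + 1 / (2 * a) * ?potential S)"
    unfolding K'_def using t assms(3-5) bias
    by (intro expect_mono explored_estimation_error_le) auto
  also have "\<dots> = \<beta> + a / 2 + 1 / (2 * a) * expect ?potential"
    unfolding subset_expectation_add subset_expectation_cmult
    by (simp add: subset_expectation_const[OF finite_triples])
  also have "\<dots> \<le> \<beta> + a / 2 + 1 / (2 * a) * (1 / K')"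
  proof -
    have "expect ?potential \<le> 1 / K'"
      using t by (intro expected_dev_potential_le[OF _ m]) (auto simp: K'_def)
    then show ?thesis
      using \<open>0 < a\<close> divide_right_mono[of "expect ?potential" "1 / K'" "2 * a"] by (simp add: mult.commute)
  qed
  finally show ?thesis unfolding K'_def by simp
qed

lemma pick_regret_le_estimation_errors:
  assumes "t \<ge> 1" and feas: "feasible M Nset cost B t s"
  shows "of_bool (\<not> exploration_round M Nset K lc t \<sigma>) * (util M s v - util M (pick t \<sigma>) v)
         \<le> 1 / real M * (\<Sum>m\<in>{1..M}. \<Sum>n\<in>Nset m t.
              \<bar>v n m - est_p \<sigma> n m (lc t n m)\<bar> * of_bool (K t < real (fst \<sigma> n m (lc t n m))))"
proof (cases "exploration_round M Nset K lc t \<sigma>")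
  case True
  then show ?thesis by (simp add: sum_nonneg)
next
  case False
  define est where "est n m = est_p \<sigma> n m (lc t n m)" for n m
  have explored: "K t < real (fst \<sigma> n m (lc t n m))" if "m \<in> {1..M}" "n \<in> Nset m t" for n m
    using False that unfolding exploration_round_def under_explored_def by (meson not_le)
  have "util M s est \<le> util M (pick t \<sigma>) est"
    unfolding est_def using pick_exploit[OF \<open>t \<ge> 1\<close> False feas] .
  then have "util M s v - util M (pick t \<sigma>) v
      \<le> util M s (\<lambda>n m. v n m - est n m) - util M (pick t \<sigma>) (\<lambda>n m. v n m - est n m)"
    unfolding util_diff[symmetric] by simp
  also have "\<dots> \<le> 1 / real M * (\<Sum>m\<in>{1..M}. \<Sum>n\<in>Nset m t. \<bar>v n m - est n m\<bar>)"
    using finite_Nset feasible_subset[OF feas] feasible_subset[OF pick_feasible[OF \<open>t \<ge> 1\<close>]]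
    by (intro util_diff_le_sum_abs) auto
  also have "\<dots> = 1 / real M * (\<Sum>m\<in>{1..M}. \<Sum>n\<in>Nset m t.
      \<bar>v n m - est n m\<bar> * of_bool (K t < real (fst \<sigma> n m (lc t n m))))"
    using explored by (intro arg_cong2[where f = "(*)"] sum.cong) auto
  finally show ?thesis
    using False unfolding est_def by simp
qed

definition exploit_regret :: "decision \<Rightarrow> (nat \<times> nat \<times> nat) set \<Rightarrow> nat \<Rightarrow> real" where
  "exploit_regret s S t =
     (if exploration_round M Nset K lc t (run_state S (t - 1)) then 0
      else util M s (\<lambda>n m. of_bool ((t, n, m) \<in> S))
           - util M (run_dec S t) (\<lambda>n m. of_bool ((t, n, m) \<in> S)))"

lemma expect_util_round_indicator:
  assumes t: "t \<in> {1..T}"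
    and restrict: "\<And>S. f S = f (S \<inter> rounds_before t)" "\<And>S. s S = s (S \<inter> rounds_before t)"
    and subset: "\<And>S m. m \<in> {1..M} \<Longrightarrow> s S m \<subseteq> Nset m t"
  shows "expect (\<lambda>S. f S * util M (s S) (\<lambda>n m. of_bool ((t, n, m) \<in> S)))
       = expect (\<lambda>S. f S * util M (s S) (q t))"
proof -
  have expand: "f S * util M (s S) v
      = 1 / real M * (\<Sum>m\<in>{1..M}. \<Sum>n\<in>Nset m t. (f S * of_bool (n \<in> s S m)) * v n m)" for S v
  proof -
    have "util M (s S) v = 1 / real M * (\<Sum>m\<in>{1..M}. \<Sum>n\<in>Nset m t. of_bool (n \<in> s S m) * v n m)"
      by (rule util_sum_indicator) (auto simp: finite_Nset subset)
    then show ?thesis by (simp add: sum_distrib_left mult_ac)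
  qed
  have "expect (\<lambda>S. (f S * of_bool (n \<in> s S m)) * of_bool ((t, n, m) \<in> S))
      = expect (\<lambda>S. (f S * of_bool (n \<in> s S m)) * q t n m)"
    if "m \<in> {1..M}" "n \<in> Nset m t" for n m
  proof -
    have "(t, n, m) \<in> triples" using t that by (simp add: triples_def)
    moreover have "(t, n, m) \<notin> rounds_before t" by (simp add: rounds_before_def)
    ultimately show ?thesis
      using restrict
      by (subst subset_expectation_mult_indicator[OF finite_triples])
        (auto simp: triple_prob_def subset_expectation_cmult mult.commute)
  qed
  then show ?thesis
    unfolding expand subset_expectation_cmult subset_expectation_sum by simp
qed

lemma expect_exploit_regret_eq:
  assumes t: "t \<in> {1..T}" and feas: "feasible M Nset cost B t s"
  defines "explo S \<equiv> (of_bool (\<not> exploration_round M Nset K lc t (run_state S (t - 1))) :: real)"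
  shows "expect (\<lambda>S. exploit_regret s S t)
         = expect (\<lambda>S. explo S * (util M s (q t) - util M (run_dec S t) (q t)))"
proof -
  have "t \<ge> 1" using t by simp
  have explo_restrict: "explo S = explo (S \<inter> rounds_before t)" for S
    unfolding explo_def using run_state_restrict[of "t - 1" t S] \<open>t \<ge> 1\<close> by simp
  have "expect (\<lambda>S. explo S * util M s (\<lambda>n m. of_bool ((t, n, m) \<in> S)))
      = expect (\<lambda>S. explo S * util M s (q t))"
    by (rule expect_util_round_indicator[where f = explo and s = "\<lambda>_. s", OF t explo_restrict])
      (use feasible_subset[OF feas] in auto)
  moreover have "expect (\<lambda>S. explo S * util M (run_dec S t) (\<lambda>n m. of_bool ((t, n, m) \<in> S)))
      = expect (\<lambda>S. explo S * util M (run_dec S t) (q t))"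
    using run_dec_restrict[of t t] run_dec_subset[OF \<open>t \<ge> 1\<close>]
    by (rule expect_util_round_indicator[where f = explo, OF t explo_restrict]) auto
  moreover have "exploit_regret s S t
      = explo S * util M s (\<lambda>n m. of_bool ((t, n, m) \<in> S))
        - explo S * util M (run_dec S t) (\<lambda>n m. of_bool ((t, n, m) \<in> S))" for S
    unfolding exploit_regret_def explo_def by simp
  ultimately show ?thesis
    unfolding right_diff_distrib by (simp add: subset_expectation_diff)
qed

lemma expected_exploit_regret_le:
  assumes t: "t \<in> {1..T}" and feas: "feasible M Nset cost B t s"
    and "0 \<le> K t" "0 < a" "0 \<le> \<beta>"
    and bias: "\<And>j n m. j \<in> {1..<t} \<Longrightarrow> m \<in> {1..M} \<Longrightarrow> n \<in> Nset m j \<Longrightarrow> n \<in> Nset m t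
                 \<Longrightarrow> lc j n m = lc t n m \<Longrightarrow> \<bar>q j n m - q t n m\<bar> \<le> \<beta>"
  shows "expect (\<lambda>S. exploit_regret s S t) \<le> real N * (\<beta> + 1 / (2 * a * max (K t) 1) + a / 2)"
proof -
  define bound where "bound = \<beta> + 1 / (2 * a * max (K t) 1) + a / 2"
  have "0 \<le> bound" unfolding bound_def using assms by simp
  have "t \<ge> 1" using t by simp
  define err where "err S n m = \<bar>q t n m - est_p (run_state S (t - 1)) n m (lc t n m)\<bar>
      * of_bool (K t < real (fst (run_state S (t - 1)) n m (lc t n m)))" for S n m
  have "expect (\<lambda>S. exploit_regret s S t)
      \<le> expect (\<lambda>S. 1 / real M * (\<Sum>m\<in>{1..M}. \<Sum>n\<in>Nset m t. err S n m))"
    unfolding expect_exploit_regret_eq[OF t feas] err_def run_dec_def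
    by (intro expect_mono pick_regret_le_estimation_errors[OF \<open>t \<ge> 1\<close> feas])
  also have "\<dots> = 1 / real M * (\<Sum>m\<in>{1..M}. \<Sum>n\<in>Nset m t. expect (\<lambda>S. err S n m))"
    unfolding subset_expectation_cmult subset_expectation_sum ..
  also have "\<dots> \<le> 1 / real M * (\<Sum>m\<in>{1..M}. \<Sum>n\<in>Nset m t. bound)"
    unfolding err_def bound_def using assms
    by (intro mult_left_mono sum_mono expected_estimation_error_le) auto
  also have "\<dots> \<le> 1 / real M * (\<Sum>m\<in>{1..M}. real N * bound)"
  proof (intro mult_left_mono sum_mono)
    fix m
    have "card (Nset m t) \<le> N" using card_mono[OF _ Nset_subset, of m t] by simp
    then show "(\<Sum>n\<in>Nset m t. bound) \<le> real N * bound"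
      using \<open>0 \<le> bound\<close> by (simp add: mult_right_mono)
  qed simp
  also have "\<dots> \<le> real N * bound"
    using \<open>0 \<le> bound\<close> by (cases "M = 0") simp_all
  finally show ?thesis unfolding bound_def .
qed

lemma expected_exploit_regret_le_sqrt:
  assumes t: "t \<in> {1..T}" and feas: "feasible M Nset cost B t s"
    and K_t: "K t = real t powr z * ln (real t)" and "0 < z" "0 \<le> \<beta>"
    and bias: "\<And>j n m. j \<in> {1..<t} \<Longrightarrow> m \<in> {1..M} \<Longrightarrow> n \<in> Nset m j \<Longrightarrow> n \<in> Nset m t
                 \<Longrightarrow> lc j n m = lc t n m \<Longrightarrow> \<bar>q j n m - q t n m\<bar> \<le> \<beta>"
  shows "expect (\<lambda>S. exploit_regret s S t) \<le> real N * (\<beta> + 2 * real t powr (- z / 2))"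
proof -
  define u where "u = real t powr (- z / 2)"
  have "expect (\<lambda>S. exploit_regret s S t) \<le> real N * (\<beta> + 1 / (2 * (2 * u) * max (K t) 1) + 2 * u / 2)"
    using t K_t \<open>0 \<le> \<beta>\<close> by (intro expected_exploit_regret_le[OF t feas] bias) (auto simp: u_def)
  also have "\<dots> \<le> real N * (\<beta> + 2 * u)"
    using exploration_tradeoff[of t z] t \<open>0 < z\<close> K_t unfolding u_def by (simp add: mult_left_mono)
  finally show ?thesis unfolding u_def .
qed

lemma exploit_regret_eq_0_if_costs_exceed_budget:
  assumes "t \<ge> 1" and feas: "feasible M Nset cost B t s" and "0 \<le> B"
    and exceed: "\<And>m n. m \<in> {1..M} \<Longrightarrow> n \<in> Nset m t \<Longrightarrow> B < cost n t"
  shows "exploit_regret s S t = 0"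
proof -
  have "s m = {}" if "m \<in> {1..M}" for m
    by (rule feasible_empty_if_costs_exceed_budget[OF feas that finite_Nset \<open>0 \<le> B\<close>])
      (rule exceed[OF that])
  moreover have "run_dec S t m = {}" if "m \<in> {1..M}" for m
    unfolding run_dec_def
    by (rule feasible_empty_if_costs_exceed_budget[OF pick_feasible[OF \<open>t \<ge> 1\<close>] that finite_Nset \<open>0 \<le> B\<close>])
      (rule exceed[OF that])
  ultimately show ?thesis unfolding exploit_regret_def util_def by simp
qed

lemma R_exploit_eq_sum_exploit_regret:
  assumes sopt: "\<And>t. t \<in> {1..T} \<Longrightarrow> feasible M Nset cost B t (sopt t)"
  shows "R_exploit M Nset K lc pick sopt X T \<omega>
         = (\<Sum>t\<in>{1..T}. exploit_regret (sopt t) {i \<in> triples. (\<lambda>(t, n, m). X t n m) i \<omega>} t)"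
proof -
  define S where "S = {i \<in> triples. (\<lambda>(t, n, m). X t n m) i \<omega>}"
  have in_S: "(t, n, m) \<in> S \<longleftrightarrow> X t n m \<omega>" if "t \<in> {1..T}" "m \<in> {1..M}" "n \<in> Nset m t" for t n m
    using that unfolding S_def triples_def by auto
  have state: "cocs_st pick lc X \<omega> (t - 1) = run_state S (t - 1)" if "t \<in> {1..T}" for t
    unfolding run_state_def using that by (intro cocs_st_cong) (auto simp: in_S)
  have "util M s (\<lambda>n m. of_bool (X t n m \<omega>)) = util M s (\<lambda>n m. of_bool ((t, n, m) \<in> S))"
    if "t \<in> {1..T}" "\<And>m. m \<in> {1..M} \<Longrightarrow> s m \<subseteq> Nset m t" for s t
  proof (intro util_cong)
    fix m n assume m: "m \<in> {1..M}" and "n \<in> s m"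
    then have "n \<in> Nset m t" using that(2) by blast
    then show "of_bool (X t n m \<omega>) = (of_bool ((t, n, m) \<in> S) :: real)"
      using in_S[OF that(1) m] by simp
  qed
  then show ?thesis
    unfolding R_exploit_def S_def[symmetric] exploit_regret_def cocs_dec_def run_dec_def
    using feasible_subset[OF sopt] feasible_subset[OF pick_feasible] state
    by (intro sum.cong) auto
qed

lemma integral_R_exploit:
  assumes "prob_space P"
    and indep: "prob_space.indep_vars P (\<lambda>_. count_space UNIV) (\<lambda>(t, n, m). X t n m)
                 {(t, n, m). t \<ge> 1 \<and> m \<in> {1..M} \<and> n \<in> Nset m t}"
    and prob_X: "\<And>t n m. t \<ge> 1 \<Longrightarrow> m \<in> {1..M} \<Longrightarrow> n \<in> Nset m t \<Longrightarrow>
                 measure P {\<omega> \<in> space P. X t n m \<omega>} = q t n m"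
    and sopt: "\<And>t. t \<in> {1..T} \<Longrightarrow> feasible M Nset cost B t (sopt t)"
  shows "(\<integral>\<omega>. R_exploit M Nset K lc pick sopt X T \<omega> \<partial>P)
         = (\<Sum>t\<in>{1..T}. expect (\<lambda>S. exploit_regret (sopt t) S t))"
proof -
  interpret prob_space P by fact
  have R_eq: "R_exploit M Nset K lc pick sopt X T = (\<lambda>\<omega>. \<Sum>t\<in>{1..T}.
      exploit_regret (sopt t) {i \<in> triples. (\<lambda>(t, n, m). X t n m) i \<omega>} t)"
    using sopt by (intro ext R_exploit_eq_sum_exploit_regret) blast
  have "(\<integral>\<omega>. R_exploit M Nset K lc pick sopt X T \<omega> \<partial>P)
      = expect (\<lambda>S. \<Sum>t\<in>{1..T}. exploit_regret (sopt t) S t)"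
    unfolding R_eq using prob_X
    by (intro integral_realized_set[OF indep _ finite_triples,
          where g = "\<lambda>S. \<Sum>t\<in>{1..T}. exploit_regret (sopt t) S t"])
      (auto simp: triples_def triple_prob_def)
  then show ?thesis by (simp add: subset_expectation_sum)
qed

end

theorem lemma2:
  fixes N M T :: nat
    and B L \<alpha> z \<gamma> A \<theta> cmin :: real
    and Nset :: "nat \<Rightarrow> nat \<Rightarrow> nat set"          \<comment> \<open>Nset m t = N_m^t\<close>
    and y :: "nat \<Rightarrow> nat \<Rightarrow> real"                 \<comment> \<open>y n t = y_n^t\<close>
    and c :: "nat \<Rightarrow> real \<Rightarrow> real"                 \<comment> \<open>c n = c_n\<close>
    and \<phi> :: "nat \<Rightarrow> nat \<Rightarrow> nat \<Rightarrow> real \<times> real"     \<comment> \<open>\<phi> t n m = \<phi>_{n,m}^t\<close>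
    and p :: "nat \<Rightarrow> nat \<Rightarrow> real \<times> real \<Rightarrow> real"     \<comment> \<open>p n m = p_{n,m}\<close>
    and P :: "'w measure"
    and X :: "nat \<Rightarrow> nat \<Rightarrow> nat \<Rightarrow> 'w \<Rightarrow> bool"     \<comment> \<open>X t n m = X_{n,m}^t\<close>
    and pick :: "nat \<Rightarrow> cocs_state \<Rightarrow> decision"
    and sopt :: "nat \<Rightarrow> decision"
    and H :: "nat \<Rightarrow> real"
  defines "cost \<equiv> (\<lambda>n t. c n (y n t))"
    and "hT \<equiv> nat \<lceil>real T powr \<gamma>\<rceil>"
    and "K \<equiv> (\<lambda>t. real t powr z * ln (real t))"
    and "lc \<equiv> (\<lambda>t n m. cell (nat \<lceil>real T powr \<gamma>\<rceil>) (\<phi> t n m))"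
  assumes N_pos: "N \<ge> 1" and M_pos: "M \<ge> 1" and T_pos: "T \<ge> 1"
    and B_pos: "B > 0"
    and Nset_sub: "\<And>m t. Nset m t \<subseteq> {1..N}"
    and c_pos: "\<And>n v. c n v > 0"
    and c_mono: "\<And>n. mono (c n)"
    and cmin_def: "cmin = Min {cost n t | n t. n \<in> {1..N} \<and> t \<in> {1..T}}"
    and ctx: "\<And>t n m. t \<ge> 1 \<Longrightarrow> m \<in> {1..M} \<Longrightarrow> n \<in> Nset m t \<Longrightarrow>
                \<phi> t n m \<in> {0..1} \<times> {0..1}"
    and p_range: "\<And>n m v. n \<in> {1..N} \<Longrightarrow> m \<in> {1..M} \<Longrightarrow> p n m v \<in> {0..1}"
    and L_pos: "L > 0" and \<alpha>_pos: "\<alpha> > 0"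
    and hoelder: "\<And>n m v w. n \<in> {1..N} \<Longrightarrow> m \<in> {1..M} \<Longrightarrow>
                v \<in> {0..1} \<times> {0..1} \<Longrightarrow> w \<in> {0..1} \<times> {0..1} \<Longrightarrow>
                \<bar>p n m v - p n m w\<bar> \<le> L * norm (v - w) powr \<alpha>"
    and P_prob: "prob_space P"
    and X_meas: "\<And>t n m. t \<ge> 1 \<Longrightarrow> m \<in> {1..M} \<Longrightarrow> n \<in> Nset m t \<Longrightarrow>
                X t n m \<in> measurable P (count_space UNIV)"
    and X_bernoulli: "\<And>t n m. t \<ge> 1 \<Longrightarrow> m \<in> {1..M} \<Longrightarrow> n \<in> Nset m t \<Longrightarrow>
                measure P {\<omega> \<in> space P. X t n m \<omega>} = p n m (\<phi> t n m)"
    and X_indep: "prob_space.indep_vars P (\<lambda>_. count_space UNIV) (\<lambda>(t, n, m). X t n m)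
                {(t, n, m). t \<ge> 1 \<and> m \<in> {1..M} \<and> n \<in> Nset m t}"
    and z_bounds: "0 < z" "z < 1"
    and \<gamma>_bounds: "0 < \<gamma>" "\<gamma> < 1/2"
    and policy: "cocs_rule M Nset cost B K lc pick"
    and sopt_feasible: "\<And>t. t \<in> {1..T} \<Longrightarrow> feasible M Nset cost B t (sopt t)"
    and sopt_opt: "\<And>t s. t \<in> {1..T} \<Longrightarrow> feasible M Nset cost B t s \<Longrightarrow>
                util M s (\<lambda>n m. p n m (\<phi> t n m)) \<le> util M (sopt t) (\<lambda>n m. p n m (\<phi> t n m))"
    and H_lower: "\<And>t. t \<in> {1..T} \<Longrightarrow>
                H t > real N * real M * B / cmin * real t powr (- z / 2)"
    and A_pos: "A > 0" and \<theta>_bounds: "-1 < \<theta>" "\<theta> < 0"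
    and H_A: "\<And>t. t \<in> {1..T} \<Longrightarrow>
                2 * H t + 2 * real N * real M * B / cmin * L * 2 powr (\<alpha> / 2) * real hT powr (- \<alpha>)
                  \<le> A * real t powr \<theta>"
  shows "integral\<^sup>L P (R_exploit M Nset K lc pick sopt X T)
         \<le> real N * real M * B / cmin * (\<Sum>k = 1..nat \<lfloor>B / cmin\<rfloor>. real (N choose k)) * (pi\<^sup>2 / 3)
           + 3 * real N * real M * B / cmin * L * 2 powr (\<alpha> / 2) * real T powr (1 - \<gamma> * \<alpha>)
           + A / (1 + \<theta>) * real T powr (1 + \<theta>)"
proof -
  define q where "q t n m = p n m (\<phi> t n m)" for t n m
  interpret cocs_run M N T Nset cost B K lc pick q
  proof
    show "q t n m \<in> {0..1}" if "m \<in> {1..M}" "n \<in> Nset m t" for t n m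
      unfolding q_def by (meson Nset_sub p_range subsetD that)
  qed (use policy Nset_sub in auto)
  have "0 < cmin"
    unfolding cmin_def cost_def using N_pos T_pos c_pos by (rule Min_cost_pos)
  have round: "expect (\<lambda>S. exploit_regret (sopt t) S t) \<le> A * real t powr \<theta>" if t: "t \<in> {1..T}" for t
  proof (cases "B < cmin")
    case True
    have "B < cost n t" if "n \<in> Nset m t" for m n
    proof -
      have "n \<in> {1..N}" using that Nset_sub by blast
      then have "cmin \<le> cost n t" unfolding cmin_def by (rule Min_cost_le[OF _ t])
      then show ?thesis using True by linarith
    qed
    then have "exploit_regret (sopt t) S t = 0" for S
      using t B_pos by (intro exploit_regret_eq_0_if_costs_exceed_budget[OF _ sopt_feasible[OF t]]) auto
    then show ?thesis using A_pos by (simp add: subset_expectation_const[OF finite_triples])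
  next
    case False
    have "1 \<le> real T powr \<gamma>" using T_pos \<gamma>_bounds by (intro ge_one_powr_ge_zero) auto
    then have "1 \<le> \<lceil>real T powr \<gamma>\<rceil>" by linarith
    then have "1 \<le> hT" unfolding hT_def by linarith
    define \<beta> where "\<beta> = L * 2 powr (\<alpha> / 2) * real hT powr (- \<alpha>)"
    define c where "c = real N * real M * B / cmin"
    have bias: "\<bar>q j n m - q t n m\<bar> \<le> \<beta>"
      if "m \<in> {1..M}" "n \<in> Nset m j" "n \<in> Nset m t" "j \<ge> 1" "lc j n m = lc t n m" for j n m
    proof -
      have \<phi>: "\<phi> j n m \<in> {0..1} \<times> {0..1}" "\<phi> t n m \<in> {0..1} \<times> {0..1}"
        using ctx that t by auto
      have "n \<in> {1..N}" using that Nset_sub by blast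
      have "\<bar>p n m (\<phi> j n m) - p n m (\<phi> t n m)\<bar> \<le> L * 2 powr (\<alpha> / 2) * real hT powr (- \<alpha>)"
        using hoelder[OF \<open>n \<in> {1..N}\<close> that(1) \<phi>] L_pos \<alpha>_pos that(5)
        by (intro hoelder_same_cell[OF \<open>1 \<le> hT\<close> \<phi>]) (simp_all add: lc_def hT_def)
      then show ?thesis unfolding q_def \<beta>_def .
    qed
    define u where "u = real t powr (- z / 2)"
    have "expect (\<lambda>S. exploit_regret (sopt t) S t) \<le> real N * (\<beta> + 2 * u)"
      unfolding u_def using t L_pos z_bounds
      by (intro expected_exploit_regret_le_sqrt[OF t sopt_feasible[OF t]] bias) (auto simp: K_def \<beta>_def)
    also have "\<dots> \<le> c * (\<beta> + 2 * u)"
    proof (intro mult_right_mono)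
      have "1 \<le> real M * (B / cmin)"
        using mult_mono[of 1 "real M" 1 "B / cmin"] False M_pos \<open>0 < cmin\<close> by simp
      from mult_left_mono[OF this, of "real N"] show "real N \<le> c"
        unfolding c_def by simp
      show "0 \<le> \<beta> + 2 * u" unfolding \<beta>_def u_def using L_pos by simp
    qed
    also have "\<dots> \<le> A * real t powr \<theta>"
    proof -
      have "c * u < H t" using H_lower[OF t] unfolding c_def u_def by simp
      moreover have "2 * H t + 2 * (c * \<beta>) \<le> A * real t powr \<theta>"
        using H_A[OF t] unfolding c_def \<beta>_def by (simp add: mult.assoc)
      moreover have "0 \<le> c * \<beta>"
        unfolding c_def \<beta>_def using B_pos L_pos \<open>0 < cmin\<close> by simp
      ultimately show ?thesis by (simp add: distrib_left)
    qed
    finally show ?thesis .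
  qed
  have "(\<integral>\<omega>. R_exploit M Nset K lc pick sopt X T \<omega> \<partial>P)
      = (\<Sum>t\<in>{1..T}. expect (\<lambda>S. exploit_regret (sopt t) S t))"
    using X_bernoulli by (intro integral_R_exploit[OF P_prob X_indep _ sopt_feasible]) (simp add: q_def)
  also have "\<dots> \<le> A * (\<Sum>t\<in>{1..T}. real t powr \<theta>)"
    unfolding sum_distrib_left by (intro sum_mono round)
  also have "\<dots> \<le> A / (1 + \<theta>) * real T powr (1 + \<theta>)"
    using mult_left_mono[OF sum_powr_le[OF \<theta>_bounds]] A_pos by simp
  finally have "(\<integral>\<omega>. R_exploit M Nset K lc pick sopt X T \<omega> \<partial>P) \<le> A / (1 + \<theta>) * real T powr (1 + \<theta>)" .
  moreover have "0 \<le> real N * real M * B / cmin * (\<Sum>k = 1..nat \<lfloor>B / cmin\<rfloor>. real (N choose k)) * (pi\<^sup>2 / 3)"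
    using B_pos \<open>0 < cmin\<close> by (simp add: sum_nonneg)
  moreover have "0 \<le> 3 * real N * real M * B / cmin * L * 2 powr (\<alpha> / 2) * real T powr (1 - \<gamma> * \<alpha>)"
    using B_pos \<open>0 < cmin\<close> L_pos by simp
  ultimately show ?thesis by linarith
qed

end
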